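(* For any $u\equiv 4,8\pmod{12}$ and $v\equiv 2,4\pmod 6$, there is no perfect 2-D $(u\times v,4,2)$-OOC.
   Context: A 2-D $(u\times v,4,2)$-OOC is a family $\mathcal C$ of $u\times v$ $(0,1)$-matrices of Hamming weight $4$ such that for all $A=(a_{ij}),B=(b_{ij})\in\mathcal C$ and integers $r$ with $A\ne B$ or $r\not\equiv0\pmod v$, $\sum_{i,j}a_{ij}b_{i,j+r}\le 2$ (column indices mod $v$). It is perfect if it has exactly $u(uv-1)(uv-2)/24$ codewords (equivalently, the cyclic column shifts of its codewords' supports cover each $3$-subset of $I_u\times Z_v$ exactly once). *)

theory Defs
  imports Main
begin

text \<open>A u x v (0,1)-matrix is represented by its support, a subset of
  {0..<u} x {0..<v} (row index, column index).\<close>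

definition is_matrix_support :: "nat \<Rightarrow> nat \<Rightarrow> (nat \<times> nat) set \<Rightarrow> bool" where
  "is_matrix_support u v A \<longleftrightarrow> A \<subseteq> {0..<u} \<times> {0..<v}"

definition correlation :: "nat \<Rightarrow> (nat \<times> nat) set \<Rightarrow> (nat \<times> nat) set \<Rightarrow> int \<Rightarrow> nat" where
  "correlation v A B r = card {(i, j) \<in> A. (i, nat ((int j + r) mod int v)) \<in> B}"

definition is_2D_OOC_4_2 :: "nat \<Rightarrow> nat \<Rightarrow> (nat \<times> nat) set set \<Rightarrow> bool" where
  "is_2D_OOC_4_2 u v C \<longleftrightarrow>
     (\<forall>A\<in>C. is_matrix_support u v A \<and> card A = 4) \<and>
     (\<forall>A\<in>C. \<forall>B\<in>C. \<forall>r::int. (A \<noteq> B \<or> \<not> (int v dvd r)) \<longrightarrow> correlation v A B r \<le> 2)"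

definition is_perfect_2D_OOC_4_2 :: "nat \<Rightarrow> nat \<Rightarrow> (nat \<times> nat) set set \<Rightarrow> bool" where
  "is_perfect_2D_OOC_4_2 u v C \<longleftrightarrow>
     is_2D_OOC_4_2 u v C \<and> finite C \<and> 24 * card C = u * (u * v - 1) * (u * v - 2)"

end

theory Submission
  imports Defs
begin

text \<open>
  The cyclic column shifts of the codewords of a perfect code form a Steiner quadruple system on
  the \<open>u v\<close> cells: the correlation bound makes the block through a triple unique, and the
  number of codewords makes it exist. For even \<open>v\<close>, shifting by \<open>v/2\<close> is an involutive
  automorphism without fixed cells and without fixed blocks (a fixed block would be a codeword
  with correlation 4 at a nontrivial shift). Fix a cell \<open>a\<close>; the blocks through \<open>a\<close> and its
  image pair off the remaining cells, and this pairing commutes with the involution but never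
  pairs a cell with its image. So it induces a fixed-point-free involution on the \<open>u v/2 - 1\<close>
  orbits of those cells, whence \<open>u v \<equiv> 2 (mod 4)\<close>.
\<close>

section \<open>Fixed-point-free involutions\<close>

lemma card_eq_twice_card_orbits_of_involution:
  assumes "finite S"
    and closed: "\<And>x. x \<in> S \<Longrightarrow> \<sigma> x \<in> S"
    and involutive: "\<And>x. x \<in> S \<Longrightarrow> \<sigma> (\<sigma> x) = x"
    and no_fixpoint: "\<And>x. x \<in> S \<Longrightarrow> \<sigma> x \<noteq> x"
  shows "card S = 2 * card ((\<lambda>x. {x, \<sigma> x}) ` S)"
proof -
  let ?O = "(\<lambda>x. {x, \<sigma> x}) ` S"
  have orbit_eq: "{x, \<sigma> x} = {z, \<sigma> z}" if "x \<in> S" "z \<in> {x, \<sigma> x}" for x z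
    using that involutive[of x] by (auto simp: insert_commute)
  have union: "\<Union>?O = S"
    using closed by blast
  have "2 * card ?O = card (\<Union>?O)"
  proof (rule card_partition)
    show "finite ?O" "finite (\<Union>?O)"
      using \<open>finite S\<close> unfolding union by simp_all
  next
    fix c assume "c \<in> ?O"
    then obtain x where "x \<in> S" "c = {x, \<sigma> x}"
      by blast
    then show "card c = 2"
      using no_fixpoint[of x] by simp
  next
    fix c1 c2 assume "c1 \<in> ?O" "c2 \<in> ?O" "c1 \<noteq> c2"
    then obtain x y where "x \<in> S" "y \<in> S" "c1 = {x, \<sigma> x}" "c2 = {y, \<sigma> y}"
      by blast
    then show "c1 \<inter> c2 = {}"
      using \<open>c1 \<noteq> c2\<close> orbit_eq by blast
  qed
  then show ?thesis
    unfolding union by simp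
qed

corollary even_card_if_involution:
  assumes "finite S" "\<And>x. x \<in> S \<Longrightarrow> \<sigma> x \<in> S"
    "\<And>x. x \<in> S \<Longrightarrow> \<sigma> (\<sigma> x) = x" "\<And>x. x \<in> S \<Longrightarrow> \<sigma> x \<noteq> x"
  shows "even (card S)"
  using card_eq_twice_card_orbits_of_involution[OF assms] by simp

section \<open>Steiner quadruple systems with an involutive automorphism\<close>

locale steiner_quadruple_system =
  fixes P :: "'a set" and blocks :: "'a set set"
  assumes finite_points: "finite P"
    and block_subset: "B \<in> blocks \<Longrightarrow> B \<subseteq> P"
    and card_block: "B \<in> blocks \<Longrightarrow> card B = 4"
    and triple_covered: "T \<subseteq> P \<Longrightarrow> card T = 3 \<Longrightarrow> \<exists>B\<in>blocks. T \<subseteq> B"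
    and triple_unique:
      "B \<in> blocks \<Longrightarrow> B' \<in> blocks \<Longrightarrow> T \<subseteq> B \<Longrightarrow> T \<subseteq> B' \<Longrightarrow> card T = 3 \<Longrightarrow> B = B'"
begin

lemma block_distinct:
  assumes "{a, b, y, z} \<in> blocks"
  shows "distinct [a, b, y, z]"
  using card_block[OF assms] by (auto simp: card_insert_if split: if_splits)

definition partner :: "'a \<Rightarrow> 'a \<Rightarrow> 'a \<Rightarrow> 'a" where
  "partner a b y = (THE z. {a, b, y, z} \<in> blocks)"

lemma partner_eqI:
  assumes "{a, b, y, z} \<in> blocks"
  shows "partner a b y = z"
  unfolding partner_def
proof (rule the_equality)
  show "{a, b, y, z} \<in> blocks"
    by (fact assms)
  fix z' assume z': "{a, b, y, z'} \<in> blocks"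
  have "card {a, b, y} = 3"
    using block_distinct[OF assms] by simp
  then have "{a, b, y, z'} = {a, b, y, z}"
    using triple_unique[OF z' assms, of "{a, b, y}"] by auto
  then show "z' = z"
    using block_distinct[OF assms] block_distinct[OF z'] by auto
qed

lemma partner_block:
  assumes "a \<in> P" "b \<in> P" "a \<noteq> b" "y \<in> P - {a, b}"
  shows "{a, b, y, partner a b y} \<in> blocks"
proof -
  have "card {a, b, y} = 3"
    using assms by auto
  moreover have "{a, b, y} \<subseteq> P"
    using assms by auto
  ultimately obtain B where B: "B \<in> blocks" "{a, b, y} \<subseteq> B"
    using triple_covered by blast
  then have "card (B - {a, b, y}) = 1"
    using card_block[OF B(1)] \<open>card {a, b, y} = 3\<close> by (simp add: card_Diff_subset)
  then obtain z where "B - {a, b, y} = {z}"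
    using card_1_singletonE by blast
  then have "B = {a, b, y, z}"
    using B(2) by auto
  then show ?thesis
    using B(1) partner_eqI by simp
qed

end

locale sqs_involution = steiner_quadruple_system +
  fixes \<sigma> :: "'a \<Rightarrow> 'a"
  assumes involution_closed: "x \<in> P \<Longrightarrow> \<sigma> x \<in> P"
    and involutive: "x \<in> P \<Longrightarrow> \<sigma> (\<sigma> x) = x"
    and no_fixed_point: "x \<in> P \<Longrightarrow> \<sigma> x \<noteq> x"
    and image_block: "B \<in> blocks \<Longrightarrow> \<sigma> ` B \<in> blocks"
    and no_fixed_block: "B \<in> blocks \<Longrightarrow> \<sigma> ` B \<noteq> B"
begin

lemma involution_mem_Diff:
  assumes a: "a \<in> P" and y: "y \<in> P - {a, \<sigma> a}"
  shows "\<sigma> y \<in> P - {a, \<sigma> a}"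
proof -
  have "\<sigma> y \<noteq> a" "\<sigma> y \<noteq> \<sigma> a"
    using y involutive[OF a] involutive[of y] by (metis DiffD1 DiffD2 insertCI)+
  then show ?thesis
    using involution_closed y by simp
qed

lemma card_Diff_orbit:
  assumes a: "a \<in> P"
  shows "card P = card (P - {a, \<sigma> a}) + 2"
proof -
  have sub: "{a, \<sigma> a} \<subseteq> P" and two: "card {a, \<sigma> a} = 2"
    using a involution_closed[OF a] no_fixed_point[OF a] by auto
  then have "2 \<le> card P"
    using card_mono[OF finite_points sub] by simp
  then show ?thesis
    using card_Diff_subset[OF _ sub] two by simp
qed

lemma partner_orbit_block:
  assumes "a \<in> P" "y \<in> P - {a, \<sigma> a}"
  shows "{a, \<sigma> a, y, partner a (\<sigma> a) y} \<in> blocks"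
  using partner_block assms involution_closed no_fixed_point by metis

lemma partner_orbit_mem:
  assumes "a \<in> P" "y \<in> P - {a, \<sigma> a}"
  shows "partner a (\<sigma> a) y \<in> P - {a, \<sigma> a, y}"
  using block_subset[OF partner_orbit_block[OF assms]] block_distinct[OF partner_orbit_block[OF assms]]
  by auto

lemma partner_orbit_partner:
  assumes "a \<in> P" "y \<in> P - {a, \<sigma> a}"
  shows "partner a (\<sigma> a) (partner a (\<sigma> a) y) = y"
  using partner_eqI partner_orbit_block[OF assms] by (metis insert_commute)

lemma partner_orbit_commute:
  assumes a: "a \<in> P" and y: "y \<in> P - {a, \<sigma> a}"
  shows "partner a (\<sigma> a) (\<sigma> y) = \<sigma> (partner a (\<sigma> a) y)"
proof (rule partner_eqI)
  have "\<sigma> ` {a, \<sigma> a, y, partner a (\<sigma> a) y} = {\<sigma> a, a, \<sigma> y, \<sigma> (partner a (\<sigma> a) y)}"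
    using involutive[OF a] by simp
  then show "{a, \<sigma> a, \<sigma> y, \<sigma> (partner a (\<sigma> a) y)} \<in> blocks"
    using image_block[OF partner_orbit_block[OF a y]] by (simp add: insert_commute)
qed

lemma partner_orbit_ne_involution:
  assumes a: "a \<in> P" and y: "y \<in> P - {a, \<sigma> a}"
  shows "partner a (\<sigma> a) y \<noteq> \<sigma> y"
proof
  assume "partner a (\<sigma> a) y = \<sigma> y"
  then have "{a, \<sigma> a, y, \<sigma> y} \<in> blocks"
    using partner_orbit_block[OF a y] by simp
  moreover have "\<sigma> ` {a, \<sigma> a, y, \<sigma> y} = {a, \<sigma> a, y, \<sigma> y}"
    using involutive a y by auto
  ultimately show False
    using no_fixed_block by blast
qed

theorem card_points_mod_4:
  assumes "P \<noteq> {}"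
  shows "card P mod 4 = 2"
proof -
  obtain a where a: "a \<in> P"
    using assms by blast
  define Y where "Y = P - {a, \<sigma> a}"
  define \<tau> where "\<tau> = partner a (\<sigma> a)"
  define orbits where "orbits = (\<lambda>y. {y, \<sigma> y}) ` Y"
  have card_Y: "card Y = 2 * card orbits"
    unfolding orbits_def Y_def
    by (rule card_eq_twice_card_orbits_of_involution)
      (use finite_points involution_mem_Diff[OF a] involutive no_fixed_point in auto)
  have \<tau>_orbit: "\<tau> ` {y, \<sigma> y} = {\<tau> y, \<sigma> (\<tau> y)}" if "y \<in> Y" for y
    using partner_orbit_commute[OF a] that unfolding Y_def \<tau>_def by simp
  have "even (card orbits)"
  proof (rule even_card_if_involution)
    show "finite orbits"
      using finite_points unfolding orbits_def Y_def by simp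
    fix X assume "X \<in> orbits"
    then obtain y where y: "y \<in> Y" and X: "X = {y, \<sigma> y}"
      unfolding orbits_def by blast
    have \<tau>y: "\<tau> y \<in> Y - {y, \<sigma> y}"
      using partner_orbit_mem[OF a] partner_orbit_ne_involution[OF a] y unfolding Y_def \<tau>_def by blast
    show "\<tau> ` X \<in> orbits"
      using \<tau>_orbit[OF y] \<tau>y unfolding X orbits_def by blast
    have "\<tau> ` \<tau> ` X = {\<tau> (\<tau> y), \<sigma> (\<tau> (\<tau> y))}"
      using \<tau>_orbit[OF y] \<tau>_orbit[of "\<tau> y"] \<tau>y unfolding X by simp
    also have "\<dots> = X"
      using partner_orbit_partner[OF a] y unfolding X Y_def \<tau>_def by simp
    finally show "\<tau> ` \<tau> ` X = X" .
    show "\<tau> ` X \<noteq> X"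
      using \<tau>_orbit[OF y] \<tau>y unfolding X by auto
  qed
  then show ?thesis
    using card_Diff_orbit[OF a] card_Y unfolding Y_def by presburger
qed

end

section \<open>Cyclic column shifts\<close>

definition col_shift :: "nat \<Rightarrow> int \<Rightarrow> nat \<times> nat \<Rightarrow> nat \<times> nat" where
  "col_shift v r p = (fst p, nat ((int (snd p) + r) mod int v))"

lemma col_shift_col_shift:
  assumes "0 < v"
  shows "col_shift v r (col_shift v s p) = col_shift v (r + s) p"
  using assms by (simp add: col_shift_def mod_add_right_eq ac_simps)

lemma col_shift_image_col_shift_image:
  assumes "0 < v"
  shows "col_shift v h ` col_shift v r ` A = col_shift v (h + r) ` A"
  by (simp add: image_image col_shift_col_shift[OF assms])

lemma col_shift_cong: "r mod int v = s mod int v \<Longrightarrow> col_shift v r p = col_shift v s p"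
  unfolding col_shift_def by (metis mod_add_right_eq)

lemma col_shift_eq_self_iff:
  assumes "snd p < v"
  shows "col_shift v r p = p \<longleftrightarrow> int v dvd r"
proof -
  have "col_shift v r p = p \<longleftrightarrow> (int (snd p) + r) mod int v = int (snd p)"
    unfolding col_shift_def using assms by (cases p) (auto simp: nat_eq_iff)
  also have "\<dots> \<longleftrightarrow> (int (snd p) + r) mod int v = int (snd p) mod int v"
    using assms by simp
  also have "\<dots> \<longleftrightarrow> int v dvd r"
    by (simp add: mod_eq_dvd_iff)
  finally show ?thesis .
qed

lemma col_shift_mem_grid:
  assumes "0 < v" "p \<in> {0..<u} \<times> {0..<v}"
  shows "col_shift v r p \<in> {0..<u} \<times> {0..<v}"
  using assms by (cases p) (auto simp: col_shift_def nat_less_iff)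

lemma inj_on_col_shift:
  assumes "0 < v"
  shows "inj_on (col_shift v r) ({0..<u} \<times> {0..<v})"
proof (rule inj_onI)
  fix p q assume p: "p \<in> {0..<u} \<times> {0..<v}" and q: "q \<in> {0..<u} \<times> {0..<v}"
    and eq: "col_shift v r p = col_shift v r q"
  have "col_shift v (- r) (col_shift v r x) = x" if "x \<in> {0..<u} \<times> {0..<v}" for x
    using that col_shift_eq_self_iff[of x v 0] by (auto simp: col_shift_col_shift[OF assms])
  then show "p = q"
    using p q eq by metis
qed

lemma correlation_eq_card_col_shift:
  "correlation v A B r = card {p \<in> A. col_shift v r p \<in> B}"
  unfolding correlation_def col_shift_def by (rule arg_cong[where f = card]) auto

section \<open>Optical orthogonal codes as Steiner quadruple systems\<close>

locale ooc_4_2 =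
  fixes u v :: nat and C :: "(nat \<times> nat) set set"
  assumes is_ooc: "is_2D_OOC_4_2 u v C" and v_pos: "0 < v"
begin

abbreviation grid :: "(nat \<times> nat) set" where
  "grid \<equiv> {0..<u} \<times> {0..<v}"

lemma codeword_subset: "A \<in> C \<Longrightarrow> A \<subseteq> grid"
  using is_ooc unfolding is_2D_OOC_4_2_def is_matrix_support_def by blast

lemma card_codeword: "A \<in> C \<Longrightarrow> card A = 4"
  using is_ooc unfolding is_2D_OOC_4_2_def by blast

lemma card_col_shift_image: "A \<subseteq> grid \<Longrightarrow> card (col_shift v r ` A) = card A"
  using card_image inj_on_subset[OF inj_on_col_shift[OF v_pos]] by blast

lemma codeword_shifts_eq_if_three_common:
  assumes A: "A \<in> C" and B: "B \<in> C"
    and TA: "T \<subseteq> col_shift v r ` A" and TB: "T \<subseteq> col_shift v s ` B" and T: "3 \<le> card T"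
  shows "A = B \<and> int v dvd (r - s)"
proof -
  \<comment> \<open>every point of \<open>T\<close> contributes to the correlation of \<open>A\<close> and \<open>B\<close> at shift \<open>r - s\<close>\<close>
  define S where "S = {p \<in> A. col_shift v (r - s) p \<in> B}"
  have "T \<subseteq> col_shift v r ` S"
  proof
    fix t assume t: "t \<in> T"
    then obtain a where a: "a \<in> A" "t = col_shift v r a"
      using TA by blast
    obtain b where b: "b \<in> B" "t = col_shift v s b"
      using TB t by blast
    have "col_shift v (r - s) a = col_shift v (- s) t"
      using a(2) by (simp add: col_shift_col_shift[OF v_pos])
    also have "\<dots> = b"
      using b codeword_subset[OF B] col_shift_eq_self_iff[of b v 0]
      by (auto simp: col_shift_col_shift[OF v_pos])
    finally show "t \<in> col_shift v r ` S"
      using a b unfolding S_def by auto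
  qed
  moreover have "finite S"
    using card_codeword[OF A] card.infinite unfolding S_def by fastforce
  ultimately have "card T \<le> card S"
    by (meson card_image_le card_mono finite_imageI le_trans)
  then have "\<not> correlation v A B (r - s) \<le> 2"
    using T unfolding correlation_eq_card_col_shift S_def by simp
  then show ?thesis
    using is_ooc A B unfolding is_2D_OOC_4_2_def by blast
qed

definition blocks :: "(nat \<times> nat) set set" where
  "blocks = {col_shift v r ` A | A r. A \<in> C}"

lemma col_shift_codeword_mem_blocks: "A \<in> C \<Longrightarrow> col_shift v r ` A \<in> blocks"
  unfolding blocks_def by auto

lemma blocksE:
  assumes "B \<in> blocks"
  obtains A r where "A \<in> C" "B = col_shift v r ` A"
  using assms unfolding blocks_def by auto

lemma blocks_subset: "B \<in> blocks \<Longrightarrow> B \<subseteq> grid"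
  by (erule blocksE) (use codeword_subset col_shift_mem_grid[OF v_pos] in blast)

lemma card_blocks: "B \<in> blocks \<Longrightarrow> card B = 4"
  by (erule blocksE) (simp add: codeword_subset card_codeword card_col_shift_image)

lemma blocks_triple_unique:
  assumes "B \<in> blocks" "B' \<in> blocks" "T \<subseteq> B" "T \<subseteq> B'" "card T = 3"
  shows "B = B'"
proof -
  obtain A r A' r' where A: "A \<in> C" "B = col_shift v r ` A"
    and A': "A' \<in> C" "B' = col_shift v r' ` A'"
    using assms(1,2) by (elim blocksE)
  then have "A = A'" "r mod int v = r' mod int v"
    using codeword_shifts_eq_if_three_common[OF A(1) A'(1)] assms(3-5)
    by (simp_all add: mod_eq_dvd_iff)
  then show ?thesis
    using A(2) A'(2) col_shift_cong by (metis image_cong)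
qed

lemma col_shift_block: "B \<in> blocks \<Longrightarrow> col_shift v h ` B \<in> blocks"
  by (erule blocksE)
    (simp add: col_shift_image_col_shift_image[OF v_pos] col_shift_codeword_mem_blocks)

lemma dvd_if_col_shift_fixes_block:
  assumes "B \<in> blocks" "col_shift v h ` B = B"
  shows "int v dvd h"
proof -
  obtain A r where A: "A \<in> C" "B = col_shift v r ` A"
    using assms(1) by (rule blocksE)
  have "col_shift v h ` B = col_shift v (h + r) ` A"
    unfolding A(2) by (rule col_shift_image_col_shift_image[OF v_pos])
  then have "B \<subseteq> col_shift v (h + r) ` A"
    using assms(2) by simp
  moreover have "B \<subseteq> col_shift v r ` A" "3 \<le> card B"
    using A(2) card_blocks[OF assms(1)] by simp_all
  ultimately have "int v dvd (h + r - r)"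
    using codeword_shifts_eq_if_three_common[OF A(1) A(1)] by blast
  then show ?thesis
    by simp
qed

end

lemma six_times_choose_three: "6 * (n choose 3) = n * (n - 1) * (n - 2)"
proof -
  have three: "3 * (n choose 3) = n * ((n - 1) choose 2)"
    using times_binomial_minus1_eq[of 3 n] by simp
  have two: "2 * ((n - 1) choose 2) = (n - 1) * (n - 2)"
    using times_binomial_minus1_eq[of 2 "n - 1"] by (simp add: numeral_2_eq_2)
  have "6 * (n choose 3) = 2 * (3 * (n choose 3))"
    by simp
  also have "\<dots> = n * (2 * ((n - 1) choose 2))"
    unfolding three by simp
  also have "\<dots> = n * (n - 1) * (n - 2)"
    unfolding two by simp
  finally show ?thesis .
qed

locale perfect_ooc_4_2 = ooc_4_2 +
  assumes finite_codewords: "finite C"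
    and card_codewords: "24 * card C = u * (u * v - 1) * (u * v - 2)"
begin

definition shifted_triples :: "((nat \<times> nat) set \<times> int \<times> (nat \<times> nat) set) set" where
  "shifted_triples = (SIGMA A:C. {0..<int v} \<times> {S. S \<subseteq> A \<and> card S = 3})"

definition shifted_triple :: "(nat \<times> nat) set \<times> int \<times> (nat \<times> nat) set \<Rightarrow> (nat \<times> nat) set" where
  "shifted_triple = (\<lambda>(A, r, S). col_shift v r ` S)"

lemma card_shifted_triples: "card shifted_triples = card {T. T \<subseteq> grid \<and> card T = 3}"
proof -
  have finite_codeword: "finite A" if "A \<in> C" for A
    using card_codeword[OF that] card.infinite by fastforce
  have card_triples_codeword: "card {S. S \<subseteq> A \<and> card S = 3} = 4" if "A \<in> C" for A
    using n_subsets[OF finite_codeword[OF that], of 3] card_codeword[OF that]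
    by (simp add: numeral_3_eq_3 numeral_eq_Suc)
  have "card shifted_triples = (\<Sum>A\<in>C. card ({0..<int v} \<times> {S. S \<subseteq> A \<and> card S = 3}))"
    unfolding shifted_triples_def using finite_codewords finite_codeword
    by (subst card_SigmaI) auto
  also have "\<dots> = (\<Sum>A\<in>C. v * 4)"
    using card_triples_codeword by (intro sum.cong) (auto simp: card_cartesian_product)
  finally have "6 * card shifted_triples = 6 * ((u * v) choose 3)"
    using card_codewords six_times_choose_three[of "u * v"] by (simp add: ac_simps)
  then show ?thesis
    using n_subsets[of grid 3] by (simp add: card_cartesian_product)
qed

lemma inj_on_shifted_triple: "inj_on shifted_triple shifted_triples"
proof (rule inj_onI)
  fix x y assume "x \<in> shifted_triples" "y \<in> shifted_triples"
    and eq: "shifted_triple x = shifted_triple y"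
  then obtain A r S A' r' S' where x: "x = (A, r, S)" and y: "y = (A', r', S')"
    and A: "A \<in> C" "0 \<le> r" "r < int v" "S \<subseteq> A" "card S = 3"
    and A': "A' \<in> C" "0 \<le> r'" "r' < int v" "S' \<subseteq> A'" "card S' = 3"
    unfolding shifted_triples_def by auto
  have eq': "col_shift v r ` S = col_shift v r' ` S'"
    using eq unfolding x y shifted_triple_def by simp
  moreover have "card (col_shift v r ` S) = 3"
    using A codeword_subset card_col_shift_image by (metis subset_trans)
  ultimately have "A = A' \<and> int v dvd (r - r')"
    using codeword_shifts_eq_if_three_common[OF A(1) A'(1)] A(4) A'(4)
    by (metis image_mono order_refl)
  moreover from this have "r = r'"
    using A A' by (metis mod_eq_dvd_iff mod_pos_pos_trivial)
  moreover have "inj_on (col_shift v r) A"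
    using inj_on_subset[OF inj_on_col_shift[OF v_pos] codeword_subset[OF A(1)]] .
  ultimately show "x = y"
    using eq' A(4) A'(4) unfolding x y by (simp add: inj_on_image_eq_iff)
qed

lemma shifted_triple_image: "shifted_triple ` shifted_triples \<subseteq> {T. T \<subseteq> grid \<and> card T = 3}"
proof
  fix T assume "T \<in> shifted_triple ` shifted_triples"
  then obtain A r S where "(A, r, S) \<in> shifted_triples" and T: "T = col_shift v r ` S"
    unfolding shifted_triple_def by auto
  then have S: "S \<subseteq> grid" "card S = 3"
    using codeword_subset unfolding shifted_triples_def by auto
  have "T \<subseteq> grid"
    unfolding T using S(1) col_shift_mem_grid[OF v_pos] by blast
  moreover have "card T = 3"
    unfolding T using S by (simp add: card_col_shift_image)
  ultimately show "T \<in> {T. T \<subseteq> grid \<and> card T = 3}"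
    by simp
qed

lemma triple_covered:
  assumes "T \<subseteq> grid" "card T = 3"
  shows "\<exists>B\<in>blocks. T \<subseteq> B"
proof -
  \<comment> \<open>an injection between sets of equal size \<open>(u v choose 3)\<close>, by perfectness\<close>
  have "shifted_triple ` shifted_triples = {T. T \<subseteq> grid \<and> card T = 3}"
    using card_subset_eq[OF _ shifted_triple_image] card_image[OF inj_on_shifted_triple]
      card_shifted_triples by simp
  then obtain x where x: "x \<in> shifted_triples" "T = shifted_triple x"
    using assms by blast
  obtain A r S where "x = (A, r, S)"
    by (cases x)
  with x have "A \<in> C" "T \<subseteq> col_shift v r ` A"
    unfolding shifted_triples_def shifted_triple_def by auto
  then show ?thesis
    using col_shift_codeword_mem_blocks by blast
qed

sublocale steiner_quadruple_system grid blocks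
proof unfold_locales
  show "finite grid"
    by simp
qed (fact blocks_subset card_blocks triple_covered blocks_triple_unique)+

lemma card_grid_mod_4:
  assumes "even v" "0 < u"
  shows "u * v mod 4 = 2"
proof -
  define h where "h = int (v div 2)"
  have h: "0 < h" "h < int v" "int v dvd h + h"
    using assms(1) v_pos unfolding h_def by auto
  have not_dvd: "\<not> int v dvd h"
    using zdvd_not_zless[OF h(1,2)] .
  interpret sqs_involution grid blocks "col_shift v h"
  proof unfold_locales
    fix p assume p: "p \<in> grid"
    then have col: "snd p < v"
      by auto
    show "col_shift v h p \<in> grid"
      using col_shift_mem_grid[OF v_pos p] .
    show "col_shift v h (col_shift v h p) = p"
      unfolding col_shift_col_shift[OF v_pos] col_shift_eq_self_iff[OF col] using h(3) .
    show "col_shift v h p \<noteq> p"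
      unfolding col_shift_eq_self_iff[OF col] using not_dvd .
  next
    fix B assume "B \<in> blocks"
    then show "col_shift v h ` B \<in> blocks" "col_shift v h ` B \<noteq> B"
      using col_shift_block dvd_if_col_shift_fixes_block not_dvd by blast+
  qed
  have "grid \<noteq> {}"
    using assms(2) v_pos by auto
  then show ?thesis
    using card_points_mod_4 by (simp add: card_cartesian_product)
qed

end

theorem corollary5p5:
  fixes u v :: nat
  assumes "u mod 12 = 4 \<or> u mod 12 = 8"
    and "v mod 6 = 2 \<or> v mod 6 = 4"
  shows "\<not> (\<exists>C. is_perfect_2D_OOC_4_2 u v C)"
proof
  assume "\<exists>C. is_perfect_2D_OOC_4_2 u v C"
  then obtain C where "is_perfect_2D_OOC_4_2 u v C" ..
  moreover have "even u" "0 < u" "even v" "0 < v"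
    using assms by presburger+
  ultimately interpret perfect_ooc_4_2 u v C
    unfolding is_perfect_2D_OOC_4_2_def by unfold_locales auto
  have "u * v mod 4 = 2"
    using card_grid_mod_4 \<open>even v\<close> \<open>0 < u\<close> .
  moreover have "4 dvd u * v"
    using \<open>even u\<close> \<open>even v\<close> by (auto elim!: evenE)
  ultimately show False
    by simp
qed

end
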